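(* Let $\mathcal L=(\Sigma,X)$ be a language and $\Lambda$ a basic fuzzy theory in $\mathcal L$. Let $\mathscr F_\Lambda\dashv\mathscr U_\Lambda$ be the free-model adjunction with counit $\epsilon$, let $\mathsf T_\Lambda=\mathscr U_\Lambda\circ\mathscr F_\Lambda$ be the associated monad on $\mathbf{Fuz}_H$, and let $\mathscr K:\mathbf{Mod}(\Lambda)\to\mathbf{EM}(\mathsf T_\Lambda)$ be the comparison functor, sending a model $\mathcal A$ to the Eilenberg–Moore algebra $\mathscr U_\Lambda(\epsilon_{\mathcal A}):\mathsf T_\Lambda(\mathscr U_\Lambda\mathcal A)\to\mathscr U_\Lambda\mathcal A$ and acting as the identity on underlying arrows. Then $\mathscr K$ is an isomorphism of categories. In particular $\mathbf{Mod}(\Lambda)$ and the category $\mathbf{EM}(\mathsf T_\Lambda)$ of Eilenberg–Moore algebras of $\mathsf T_\Lambda$ are isomorphic.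
   Context: $H$ is a frame with bottom $\bot$. An $H$-fuzzy set is a pair $(A,\mu_A)$ of a set $A$ and a function $\mu_A:A\to H$; an arrow $f:(A,\mu_A)\to(B,\mu_B)$ is a function with $\mu_A(x)\le\mu_B(f(x))$; they form $\mathbf{Fuz}_H$. For $n\ge1$, $(A,\mu_A)^n=(A^n,\mu)$ with $\mu(a_1,\dots,a_n)=\bigwedge_i\mu_A(a_i)$. A signature $\Sigma=(O,\mathrm{ar},C)$ consists of a set $O$ of operation symbols with arity $\mathrm{ar}:O\to\{1,2,3,\dots\}$ and a set $C$ of constant symbols. A language is a pair $\mathcal L=(\Sigma,X)$ with $X$ a set of variables. $\mathrm{Terms}(\mathcal L)$ is the smallest set containing $X\sqcup C$ and containing $f(t_1,\dots,t_{\mathrm{ar}(f)})$ whenever $f\in O$ and all $t_i\in\mathrm{Terms}(\mathcal L)$. A formula is either an equation $s\equiv t$ ($s,t$ terms) or a membership proposition $\mathsf E_l(t)$ with $l\in H$ and $t$ a term. A sequent $\Gamma\vdash\psi$ is a pair of a (possibly infinite) set $\Gamma$ of formulas and a formula $\psi$. A fuzzy theory in $\mathcal L$ is a set of sequents. A theory is basic if for every sequent $\Gamma\vdash\phi$ in it, every formula of $\Gamma$ has the form $x\equiv y$ or $\mathsf E_l(x)$ with $x,y\in X$ variables ($\phi$ arbitrary). A $\Sigma$-algebra $\mathcal A=((A,\mu_A),\Sigma^{\mathcal A})$ is an $H$-fuzzy set $(A,\mu_A)$ together with, for each $f\in O$, an arrow $f^{\mathcal A}:(A,\mu_A)^{\mathrm{ar}(f)}\to(A,\mu_A)$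 of $\mathbf{Fuz}_H$ and, for each $c\in C$, an element $c^{\mathcal A}\in A$. A morphism of $\Sigma$-algebras is an arrow of $\mathbf{Fuz}_H$ between the carriers preserving all constants and commuting with all operations. An assignment is a function $\iota:X\to A$; evaluation: $x^{\mathcal A,\iota}=\iota(x)$, $c^{\mathcal A,\iota}=c^{\mathcal A}$, $f(t_1,\dots,t_n)^{\mathcal A,\iota}=f^{\mathcal A}(t_1^{\mathcal A,\iota},\dots,t_n^{\mathcal A,\iota})$. $\mathcal A\vDash_\iota s\equiv t$ iff $s^{\mathcal A,\iota}=t^{\mathcal A,\iota}$; $\mathcal A\vDash_\iota\mathsf E_l(t)$ iff $l\le\mu_A(t^{\mathcal A,\iota})$. $\mathcal A$ satisfies $\Gamma\vdash\psi$ if for every assignment $\iota$ with $\mathcal A\vDash_\iota\phi$ for all $\phi\in\Gamma$ one has $\mathcal A\vDash_\iota\psi$. $\mathcal A$ is a model of a theory $\Lambda$ if it satisfies every sequent of $\Lambda$. $\mathbf{Mod}(\Lambda)$ is the full subcategory of the category of $\Sigma$-algebras on the models of $\Lambda$, and $\mathscr U_\Lambda:\mathbf{Mod}(\Lambda)\to\mathbf{Fuz}_H$ is the forgetful functor to carriers; it has a left adjoint $\mathscr F_\Lambda$ (free model functor). *)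

theory Defs
  imports Main
begin

class frame = complete_lattice +
  assumes frame_inf_Sup: "inf a (Sup S) = (SUP b\<in>S. inf a b)"

text \<open>An H-fuzzy set is a carrier \<open>A\<close> together with \<open>\<mu> :: 'a \<Rightarrow> 'h\<close> (values outside \<open>A\<close> irrelevant).\<close>
definition fuz_arrow :: "'a set \<Rightarrow> ('a \<Rightarrow> 'h::order) \<Rightarrow> 'b set \<Rightarrow> ('b \<Rightarrow> 'h) \<Rightarrow> ('a \<Rightarrow> 'b) \<Rightarrow> bool" where
  "fuz_arrow A \<mu> B \<nu> h \<longleftrightarrow> (\<forall>a\<in>A. h a \<in> B \<and> \<mu> a \<le> \<nu> (h a))"

datatype ('o,'c,'v) trm = V 'v | K 'c | Op 'o "('o,'c,'v) trm list"

inductive wf_trm :: "'o set \<Rightarrow> ('o \<Rightarrow> nat) \<Rightarrow> 'c set \<Rightarrow> 'v set \<Rightarrow> ('o,'c,'v) trm \<Rightarrow> bool"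
  for Ops ar C Vs where
  wf_V: "v \<in> Vs \<Longrightarrow> wf_trm Ops ar C Vs (V v)"
| wf_K: "c \<in> C \<Longrightarrow> wf_trm Ops ar C Vs (K c)"
| wf_Op: "f \<in> Ops \<Longrightarrow> length ts = ar f \<Longrightarrow> (\<forall>t\<in>set ts. wf_trm Ops ar C Vs t)
           \<Longrightarrow> wf_trm Ops ar C Vs (Op f ts)"

primrec subst :: "('v \<Rightarrow> ('o,'c,'w) trm) \<Rightarrow> ('o,'c,'v) trm \<Rightarrow> ('o,'c,'w) trm" where
  "subst \<sigma> (V v) = \<sigma> v"
| "subst \<sigma> (K c) = K c"
| "subst \<sigma> (Op f ts) = Op f (map (subst \<sigma>) ts)"

primrec eval :: "('o \<Rightarrow> 'a list \<Rightarrow> 'a) \<Rightarrow> ('c \<Rightarrow> 'a) \<Rightarrow> ('v \<Rightarrow> 'a) \<Rightarrow> ('o,'c,'v) trm \<Rightarrow> 'a" where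
  "eval ops cst \<iota> (V v) = \<iota> v"
| "eval ops cst \<iota> (K c) = cst c"
| "eval ops cst \<iota> (Op f ts) = ops f (map (eval ops cst \<iota>) ts)"

text \<open>Formulas: equations and membership propositions \<open>E_l(t)\<close>.\<close>
datatype ('o,'c,'x,'h) fml = Eqn "('o,'c,'x) trm" "('o,'c,'x) trm" | Mem 'h "('o,'c,'x) trm"

type_synonym ('o,'c,'x,'h) sequent = "('o,'c,'x,'h) fml set \<times> ('o,'c,'x,'h) fml"

fun wf_fml :: "'o set \<Rightarrow> ('o \<Rightarrow> nat) \<Rightarrow> 'c set \<Rightarrow> 'x set \<Rightarrow> ('o,'c,'x,'h) fml \<Rightarrow> bool" where
  "wf_fml Ops ar C X (Eqn s t) = (wf_trm Ops ar C X s \<and> wf_trm Ops ar C X t)"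
| "wf_fml Ops ar C X (Mem l t) = wf_trm Ops ar C X t"

definition fuzzy_theory :: "'o set \<Rightarrow> ('o \<Rightarrow> nat) \<Rightarrow> 'c set \<Rightarrow> 'x set \<Rightarrow> ('o,'c,'x,'h) sequent set \<Rightarrow> bool" where
  "fuzzy_theory Ops ar C X \<Lambda> \<longleftrightarrow>
     (\<forall>(\<Gamma>,\<psi>)\<in>\<Lambda>. (\<forall>\<phi>\<in>\<Gamma>. wf_fml Ops ar C X \<phi>) \<and> wf_fml Ops ar C X \<psi>)"

definition basic_theory :: "'x set \<Rightarrow> ('o,'c,'x,'h) sequent set \<Rightarrow> bool" where
  "basic_theory X \<Lambda> \<longleftrightarrow>
     (\<forall>(\<Gamma>,\<psi>)\<in>\<Lambda>. \<forall>\<phi>\<in>\<Gamma>.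
        (\<exists>x y. x \<in> X \<and> y \<in> X \<and> \<phi> = Eqn (V x) (V y)) \<or> (\<exists>l x. x \<in> X \<and> \<phi> = Mem l (V x)))"

text \<open>Operations/constants are taken
  extensional (\<open>undefined\<close> outside their domain), so that they are determined by their
  values on the domain.\<close>
definition is_alg :: "'o set \<Rightarrow> ('o \<Rightarrow> nat) \<Rightarrow> 'c set \<Rightarrow> 'a set \<Rightarrow> ('a \<Rightarrow> 'h::complete_lattice)
                      \<Rightarrow> ('o \<Rightarrow> 'a list \<Rightarrow> 'a) \<Rightarrow> ('c \<Rightarrow> 'a) \<Rightarrow> bool" where
  "is_alg Ops ar C A \<mu> ops cst \<longleftrightarrow>
     (\<forall>c\<in>C. cst c \<in> A) \<and>
     (\<forall>f\<in>Ops. \<forall>xs. length xs = ar f \<and> set xs \<subseteq> A \<longrightarrow>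
          ops f xs \<in> A \<and> Inf (\<mu> ` set xs) \<le> \<mu> (ops f xs)) \<and>
     (\<forall>c. c \<notin> C \<longrightarrow> cst c = undefined) \<and>
     (\<forall>f xs. \<not> (f \<in> Ops \<and> length xs = ar f \<and> set xs \<subseteq> A) \<longrightarrow> ops f xs = undefined)"

fun holds :: "('a \<Rightarrow> 'h::order) \<Rightarrow> ('o \<Rightarrow> 'a list \<Rightarrow> 'a) \<Rightarrow> ('c \<Rightarrow> 'a) \<Rightarrow> ('x \<Rightarrow> 'a)
               \<Rightarrow> ('o,'c,'x,'h) fml \<Rightarrow> bool" where
  "holds \<mu> ops cst \<iota> (Eqn s t) = (eval ops cst \<iota> s = eval ops cst \<iota> t)"
| "holds \<mu> ops cst \<iota> (Mem l t) = (l \<le> \<mu> (eval ops cst \<iota> t))"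

definition is_model :: "'o set \<Rightarrow> ('o \<Rightarrow> nat) \<Rightarrow> 'c set \<Rightarrow> 'x set \<Rightarrow> ('o,'c,'x,'h) sequent set
                        \<Rightarrow> 'a set \<Rightarrow> ('a \<Rightarrow> 'h::complete_lattice)
                        \<Rightarrow> ('o \<Rightarrow> 'a list \<Rightarrow> 'a) \<Rightarrow> ('c \<Rightarrow> 'a) \<Rightarrow> bool" where
  "is_model Ops ar C X \<Lambda> A \<mu> ops cst \<longleftrightarrow>
     is_alg Ops ar C A \<mu> ops cst \<and>
     (\<forall>(\<Gamma>,\<psi>)\<in>\<Lambda>. \<forall>\<iota>. (\<forall>x\<in>X. \<iota> x \<in> A) \<longrightarrow>
         (\<forall>\<phi>\<in>\<Gamma>. holds \<mu> ops cst \<iota> \<phi>) \<longrightarrow> holds \<mu> ops cst \<iota> \<psi>)"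

definition alg_hom :: "'o set \<Rightarrow> ('o \<Rightarrow> nat) \<Rightarrow> 'c set
     \<Rightarrow> 'a set \<Rightarrow> ('a \<Rightarrow> 'h::order) \<Rightarrow> ('o \<Rightarrow> 'a list \<Rightarrow> 'a) \<Rightarrow> ('c \<Rightarrow> 'a)
     \<Rightarrow> 'b set \<Rightarrow> ('b \<Rightarrow> 'h) \<Rightarrow> ('o \<Rightarrow> 'b list \<Rightarrow> 'b) \<Rightarrow> ('c \<Rightarrow> 'b) \<Rightarrow> ('a \<Rightarrow> 'b) \<Rightarrow> bool" where
  "alg_hom Ops ar C A \<mu> ops cst B \<nu> ops' cst' h \<longleftrightarrow>
     fuz_arrow A \<mu> B \<nu> h \<and>
     (\<forall>c\<in>C. h (cst c) = cst' c) \<and>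
     (\<forall>f\<in>Ops. \<forall>xs. length xs = ar f \<and> set xs \<subseteq> A \<longrightarrow> h (ops f xs) = ops' f (map h xs))"

text \<open>Free model on \<open>(A,\<mu>)\<close>: terms over generators \<open>A\<close>, modulo the least congruence \<open>R\<close> and with
  the least membership \<open>\<nu>\<close> such that \<open>\<mu> \<le> \<nu>\<close> on generators, operations are Fuz-arrows,
  \<open>\<nu>\<close> respects \<open>R\<close>, and all sequents of \<open>\<Lambda>\<close> hold (assignments into terms).\<close>
fun tholds :: "(('o,'c,'a) trm \<times> ('o,'c,'a) trm) set \<Rightarrow> (('o,'c,'a) trm \<Rightarrow> 'h::order)
               \<Rightarrow> ('x \<Rightarrow> ('o,'c,'a) trm) \<Rightarrow> ('o,'c,'x,'h) fml \<Rightarrow> bool" where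
  "tholds R \<nu> \<iota> (Eqn s t) = ((subst \<iota> s, subst \<iota> t) \<in> R)"
| "tholds R \<nu> \<iota> (Mem l t) = (l \<le> \<nu> (subst \<iota> t))"

definition closed_pair :: "'o set \<Rightarrow> ('o \<Rightarrow> nat) \<Rightarrow> 'c set \<Rightarrow> 'x set \<Rightarrow> ('o,'c,'x,'h) sequent set
     \<Rightarrow> 'a set \<Rightarrow> ('a \<Rightarrow> 'h::complete_lattice)
     \<Rightarrow> (('o,'c,'a) trm \<times> ('o,'c,'a) trm) set \<Rightarrow> (('o,'c,'a) trm \<Rightarrow> 'h) \<Rightarrow> bool" where
  "closed_pair Ops ar C X \<Lambda> A \<mu> R \<nu> \<longleftrightarrow>
     equiv {t. wf_trm Ops ar C A t} R \<and>
     (\<forall>f\<in>Ops. \<forall>ss ts. length ss = ar f \<and> length ts = ar f \<and>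
          (\<forall>i<ar f. (ss ! i, ts ! i) \<in> R) \<longrightarrow> (Op f ss, Op f ts) \<in> R) \<and>
     (\<forall>a\<in>A. \<mu> a \<le> \<nu> (V a)) \<and>
     (\<forall>f\<in>Ops. \<forall>ts. length ts = ar f \<and> (\<forall>t\<in>set ts. wf_trm Ops ar C A t) \<longrightarrow>
          Inf (\<nu> ` set ts) \<le> \<nu> (Op f ts)) \<and>
     (\<forall>(s,t)\<in>R. \<nu> s = \<nu> t) \<and>
     (\<forall>(\<Gamma>,\<psi>)\<in>\<Lambda>. \<forall>\<iota>. (\<forall>x\<in>X. wf_trm Ops ar C A (\<iota> x)) \<longrightarrow>
          (\<forall>\<phi>\<in>\<Gamma>. tholds R \<nu> \<iota> \<phi>) \<longrightarrow> tholds R \<nu> \<iota> \<psi>)"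

definition free_rel where
  "free_rel Ops ar C X \<Lambda> A \<mu> = \<Inter>{R. \<exists>\<nu>. closed_pair Ops ar C X \<Lambda> A \<mu> R \<nu>}"

definition free_mem where
  "free_mem Ops ar C X \<Lambda> A \<mu> t = Inf {\<nu> t | R \<nu>. closed_pair Ops ar C X \<Lambda> A \<mu> R \<nu>}"

text \<open>Carrier and membership of \<open>T_\<Lambda>(A,\<mu>) = U_\<Lambda>(F_\<Lambda>(A,\<mu>))\<close>.\<close>
definition Tcar where
  "Tcar Ops ar C X \<Lambda> A \<mu> = {t. wf_trm Ops ar C A t} // free_rel Ops ar C X \<Lambda> A \<mu>"

definition Tmem where
  "Tmem Ops ar C X \<Lambda> A \<mu> c = (SUP t\<in>c. free_mem Ops ar C X \<Lambda> A \<mu> t)"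

definition Tunit where
  "Tunit Ops ar C X \<Lambda> A \<mu> a = free_rel Ops ar C X \<Lambda> A \<mu> `` {V a}"

text \<open>\<open>T g : T(A,\<mu>) \<rightarrow> T(B,\<nu>)\<close> for a Fuz-arrow \<open>g\<close>; only the target enters the formula.\<close>
definition Tmap where
  "Tmap Ops ar C X \<Lambda> B \<nu> g c =
     free_rel Ops ar C X \<Lambda> B \<nu> `` {subst (\<lambda>a. V (g a)) (SOME t. t \<in> c)}"

definition Tmult where
  "Tmult Ops ar C X \<Lambda> A \<mu> Z =
     free_rel Ops ar C X \<Lambda> A \<mu> `` {subst (\<lambda>c. SOME t. t \<in> c) (SOME T. T \<in> Z)}"

text \<open>\<open>U_\<Lambda>(\<epsilon>_\<A>)\<close>: the counit at a model, evaluating a representative term.\<close>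
definition counit :: "('o \<Rightarrow> 'a list \<Rightarrow> 'a) \<Rightarrow> ('c \<Rightarrow> 'a) \<Rightarrow> ('o,'c,'a) trm set \<Rightarrow> 'a" where
  "counit ops cst c = eval ops cst id (SOME t. t \<in> c)"

definition is_EM where
  "is_EM Ops ar C X \<Lambda> A \<mu> \<alpha> \<longleftrightarrow>
     fuz_arrow (Tcar Ops ar C X \<Lambda> A \<mu>) (Tmem Ops ar C X \<Lambda> A \<mu>) A \<mu> \<alpha> \<and>
     (\<forall>a\<in>A. \<alpha> (Tunit Ops ar C X \<Lambda> A \<mu> a) = a) \<and>
     (\<forall>Z\<in>Tcar Ops ar C X \<Lambda> (Tcar Ops ar C X \<Lambda> A \<mu>) (Tmem Ops ar C X \<Lambda> A \<mu>).
         \<alpha> (Tmult Ops ar C X \<Lambda> A \<mu> Z) = \<alpha> (Tmap Ops ar C X \<Lambda> A \<mu> \<alpha> Z))"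

definition is_EM_hom where
  "is_EM_hom Ops ar C X \<Lambda> A \<mu> \<alpha> B \<nu> \<beta> h \<longleftrightarrow>
     fuz_arrow A \<mu> B \<nu> h \<and>
     (\<forall>c\<in>Tcar Ops ar C X \<Lambda> A \<mu>. h (\<alpha> c) = \<beta> (Tmap Ops ar C X \<Lambda> B \<nu> h c))"

end

theory Submission
  imports Defs
begin

text \<open>The free model on \<open>(A,\<mu>)\<close> is the term algebra over \<open>A\<close> cut down by the least closed
  pair \<open>(R,\<nu>)\<close>. The kernel of evaluation into a model, and of substitution into a free model,
  is again a closed pair, so both descend to equivalence classes. This makes the counit at a
  model an Eilenberg--Moore algebra and identifies its algebra morphisms with EM morphisms.
  Conversely, an EM algebra \<open>\<alpha>\<close> interprets \<open>f\<close> by \<open>f(a\<^sub>1,\<dots>,a\<^sub>n) := \<alpha>[f(a\<^sub>1,\<dots>,a\<^sub>n)]\<close>;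
  the multiplication law shows, by induction on terms, that \<open>\<alpha>\<close> is evaluation for these
  operations, so they are the only candidates. They satisfy \<open>\<Lambda>\<close> because \<open>\<Lambda>\<close> is basic:
  premises mentioning only variables transfer from \<open>A\<close> to the generators of the free model,
  where the conclusion holds, and \<open>\<alpha>\<close> carries it back to \<open>A\<close>.\<close>

lemma wf_trm_V_iff [simp]: "wf_trm Ops ar C A (V v) \<longleftrightarrow> v \<in> A"
  by (auto elim: wf_trm.cases intro: wf_trm.intros)

lemma wf_trm_K_iff [simp]: "wf_trm Ops ar C A (K c) \<longleftrightarrow> c \<in> C"
  by (auto elim: wf_trm.cases intro: wf_trm.intros)

lemma wf_trm_Op_iff [simp]:
  "wf_trm Ops ar C A (Op f ts) \<longleftrightarrow> f \<in> Ops \<and> length ts = ar f \<and> (\<forall>t\<in>set ts. wf_trm Ops ar C A t)"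
  by (auto elim: wf_trm.cases intro: wf_trm.intros)

lemma wf_trm_subst:
  assumes "wf_trm Ops ar C A t" and "\<And>a. a \<in> A \<Longrightarrow> wf_trm Ops ar C B (\<sigma> a)"
  shows "wf_trm Ops ar C B (subst \<sigma> t)"
  using assms(1) by induction (auto intro: assms(2))

lemma eval_subst: "eval ops cst \<iota> (subst \<sigma> t) = eval ops cst (eval ops cst \<iota> \<circ> \<sigma>) t"
  by (induction t) (auto cong: map_cong)

lemma eval_cong:
  "wf_trm Ops ar C A t \<Longrightarrow> (\<And>a. a \<in> A \<Longrightarrow> g a = g' a) \<Longrightarrow> eval ops cst g t = eval ops cst g' t"
  by (induction rule: wf_trm.induct) (auto cong: map_cong)

lemma subst_subst: "subst \<sigma> (subst \<tau> t) = subst (subst \<sigma> \<circ> \<tau>) t"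
  by (induction t) auto

lemma is_algD_op:
  "is_alg Ops ar C B \<nu> ops cst \<Longrightarrow> f \<in> Ops \<Longrightarrow> length xs = ar f \<Longrightarrow> set xs \<subseteq> B \<Longrightarrow>
    ops f xs \<in> B \<and> Inf (\<nu> ` set xs) \<le> \<nu> (ops f xs)"
  unfolding is_alg_def by blast

lemma is_alg_ext:
  assumes "is_alg Ops ar C A \<mu> ops cst" and "is_alg Ops ar C A \<mu>' ops' cst'"
    and "\<And>f xs. f \<in> Ops \<Longrightarrow> length xs = ar f \<Longrightarrow> set xs \<subseteq> A \<Longrightarrow> ops f xs = ops' f xs"
    and "\<And>c. c \<in> C \<Longrightarrow> cst c = cst' c"
  shows "ops = ops'" and "cst = cst'"
  using assms unfolding is_alg_def by (metis ext)+

lemma eval_in_carrier: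
  assumes "wf_trm Ops ar C A t" and "is_alg Ops ar C B \<nu> ops cst" and "\<And>a. a \<in> A \<Longrightarrow> g a \<in> B"
  shows "eval ops cst g t \<in> B"
  using assms(1)
proof induction
  case (wf_Op f ts)
  then show ?case using is_algD_op[OF assms(2), of f "map (eval ops cst g) ts"] by auto
qed (use assms in \<open>auto simp: is_alg_def\<close>)

lemma alg_hom_eval:
  assumes alg: "is_alg Ops ar C A \<mu> ops cst" and h: "alg_hom Ops ar C A \<mu> ops cst B \<nu> ops' cst' h"
    and t: "wf_trm Ops ar C A t"
  shows "h (eval ops cst id t) = eval ops' cst' h t"
  using t
proof induction
  case (wf_K c)
  then show ?case using h by (simp add: alg_hom_def)
next
  case (wf_Op f ts)
  have "set (map (eval ops cst id) ts) \<subseteq> A"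
    using wf_Op eval_in_carrier[OF _ alg, of A _ id] by auto
  with h wf_Op(1,2) have "h (ops f (map (eval ops cst id) ts)) = ops' f (map (h \<circ> eval ops cst id) ts)"
    unfolding alg_hom_def by simp
  also have "map (h \<circ> eval ops cst id) ts = map (eval ops' cst' h) ts"
    using wf_Op(3) by (simp add: id_def)
  finally show ?case by simp
qed simp

lemma equiv_Inter:
  assumes "S \<noteq> {}" and "\<And>R. R \<in> S \<Longrightarrow> equiv A R"
  shows "equiv A (\<Inter>S)"
proof (rule equivI)
  show "\<Inter>S \<subseteq> A \<times> A" using assms unfolding equiv_def by blast
  show "refl_on A (\<Inter>S)" using assms unfolding equiv_def refl_on_def by blast
  show "sym (\<Inter>S)" using sym_INTER[of S "\<lambda>R. R"] assms by (simp add: equiv_def)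
  show "trans (\<Inter>S)" using trans_INTER[of S "\<lambda>R. R"] assms by (simp add: equiv_def)
qed

lemma tholds_mono:
  "tholds R \<nu> \<iota> \<phi> \<Longrightarrow> R \<subseteq> R' \<Longrightarrow> (\<And>t. \<nu> t \<le> \<nu>' t) \<Longrightarrow> tholds R' \<nu>' \<iota> \<phi>"
  by (cases \<phi>) (auto intro: order_trans)

locale fuzzy_thy =
  fixes Ops :: "'o set" and ar :: "'o \<Rightarrow> nat" and C :: "'c set" and X :: "'x set"
    and \<Lambda> :: "('o,'c,'x,'h::frame) sequent set"
  assumes thy: "fuzzy_theory Ops ar C X \<Lambda>"
begin

abbreviation "trms A \<equiv> {t. wf_trm Ops ar C A t}"
abbreviation "closed \<equiv> closed_pair Ops ar C X \<Lambda>"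
abbreviation "frel \<equiv> free_rel Ops ar C X \<Lambda>"
abbreviation "fmem \<equiv> free_mem Ops ar C X \<Lambda>"
abbreviation "fcls A \<mu> t \<equiv> frel A \<mu> `` {t}"
abbreviation "model \<equiv> is_model Ops ar C X \<Lambda>"
abbreviation "TC \<equiv> Tcar Ops ar C X \<Lambda>"
abbreviation "TM \<equiv> Tmem Ops ar C X \<Lambda>"

lemma sequent_wf: "(\<Gamma>,\<psi>) \<in> \<Lambda> \<Longrightarrow> wf_fml Ops ar C X \<psi> \<and> (\<forall>\<phi>\<in>\<Gamma>. wf_fml Ops ar C X \<phi>)"
  using thy unfolding fuzzy_theory_def by auto

lemma closed_pairD:
  assumes "closed A \<mu> R \<nu>"
  shows closed_pair_equiv: "equiv (trms A) R"
    and closed_pair_cong: "\<And>f ss ts. f \<in> Ops \<Longrightarrow> length ss = ar f \<Longrightarrow> length ts = ar f \<Longrightarrow>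
          (\<forall>i<ar f. (ss ! i, ts ! i) \<in> R) \<Longrightarrow> (Op f ss, Op f ts) \<in> R"
    and closed_pair_gen: "\<And>a. a \<in> A \<Longrightarrow> \<mu> a \<le> \<nu> (V a)"
    and closed_pair_op: "\<And>f ts. f \<in> Ops \<Longrightarrow> length ts = ar f \<Longrightarrow> (\<forall>t\<in>set ts. wf_trm Ops ar C A t) \<Longrightarrow>
          Inf (\<nu> ` set ts) \<le> \<nu> (Op f ts)"
    and closed_pair_resp: "\<And>s t. (s,t) \<in> R \<Longrightarrow> \<nu> s = \<nu> t"
    and closed_pair_sequent: "\<And>\<Gamma> \<psi> \<iota>. (\<Gamma>,\<psi>) \<in> \<Lambda> \<Longrightarrow> (\<forall>x\<in>X. wf_trm Ops ar C A (\<iota> x)) \<Longrightarrow>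
          (\<forall>\<phi>\<in>\<Gamma>. tholds R \<nu> \<iota> \<phi>) \<Longrightarrow> tholds R \<nu> \<iota> \<psi>"
  using assms unfolding closed_pair_def by blast+

lemma closed_pairI:
  assumes "equiv (trms A) R"
    and "\<And>f ss ts. f \<in> Ops \<Longrightarrow> length ss = ar f \<Longrightarrow> length ts = ar f \<Longrightarrow>
          (\<forall>i<ar f. (ss ! i, ts ! i) \<in> R) \<Longrightarrow> (Op f ss, Op f ts) \<in> R"
    and "\<And>a. a \<in> A \<Longrightarrow> \<mu> a \<le> \<nu> (V a)"
    and "\<And>f ts. f \<in> Ops \<Longrightarrow> length ts = ar f \<Longrightarrow> (\<forall>t\<in>set ts. wf_trm Ops ar C A t) \<Longrightarrow>
          Inf (\<nu> ` set ts) \<le> \<nu> (Op f ts)"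
    and "\<And>s t. (s,t) \<in> R \<Longrightarrow> \<nu> s = \<nu> t"
    and "\<And>\<Gamma> \<psi> \<iota>. (\<Gamma>,\<psi>) \<in> \<Lambda> \<Longrightarrow> (\<forall>x\<in>X. wf_trm Ops ar C A (\<iota> x)) \<Longrightarrow>
          (\<forall>\<phi>\<in>\<Gamma>. tholds R \<nu> \<iota> \<phi>) \<Longrightarrow> tholds R \<nu> \<iota> \<psi>"
  shows "closed A \<mu> R \<nu>"
  unfolding closed_pair_def using assms by blast

lemma closed_pair_total: "closed A \<mu> (trms A \<times> trms A) (\<lambda>_. top)"
proof (rule closed_pairI)
  show "equiv (trms A) (trms A \<times> trms A)"
    by (rule equivI) (auto simp: refl_on_def sym_def trans_def)
  show "(Op f ss, Op f ts) \<in> trms A \<times> trms A"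
    if "f \<in> Ops" "length ss = ar f" "length ts = ar f" "\<forall>i<ar f. (ss ! i, ts ! i) \<in> trms A \<times> trms A"
    for f ss ts
    using that by (auto simp: in_set_conv_nth)
  show "tholds (trms A \<times> trms A) (\<lambda>_. top) \<iota> \<psi>"
    if "(\<Gamma>,\<psi>) \<in> \<Lambda>" "\<forall>x\<in>X. wf_trm Ops ar C A (\<iota> x)" for \<Gamma> \<psi> \<iota>
    using sequent_wf[OF that(1)] that(2) by (cases \<psi>) (auto intro: wf_trm_subst)
qed auto

lemma closed_pair_least:
  assumes "closed A \<mu> R \<nu>"
  shows "frel A \<mu> \<subseteq> R" and "fmem A \<mu> t \<le> \<nu> t"
  using assms unfolding free_rel_def free_mem_def by (auto intro!: Inf_lower)

lemma free_rel_eq_Inter: "frel A \<mu> = \<Inter>{R. \<exists>\<nu>. closed A \<mu> R \<nu>}"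
  unfolding free_rel_def ..

lemma free_mem_eq_Inf: "fmem A \<mu> t = Inf {\<nu> t | R \<nu>. closed A \<mu> R \<nu>}"
  unfolding free_mem_def ..

lemma free_rel_equiv: "equiv (trms A) (frel A \<mu>)"
  unfolding free_rel_eq_Inter
  by (rule equiv_Inter) (use closed_pair_total closed_pair_equiv in blast)+

lemma free_pair_sequent:
  assumes "(\<Gamma>,\<psi>) \<in> \<Lambda>" and "\<forall>x\<in>X. wf_trm Ops ar C A (\<iota> x)"
    and "\<forall>\<phi>\<in>\<Gamma>. tholds (frel A \<mu>) (fmem A \<mu>) \<iota> \<phi>"
  shows "tholds (frel A \<mu>) (fmem A \<mu>) \<iota> \<psi>"
proof -
  have holds_in_closed: "tholds R \<nu> \<iota> \<psi>" if "closed A \<mu> R \<nu>" for R \<nu>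
    using assms(3) tholds_mono closed_pair_least[OF that]
      closed_pair_sequent[OF that assms(1,2)] by blast
  show ?thesis
  proof (cases \<psi>)
    case (Eqn s t)
    then show ?thesis using holds_in_closed unfolding free_rel_eq_Inter by auto
  next
    case (Mem l t)
    then show ?thesis using holds_in_closed unfolding free_mem_eq_Inf by (force intro!: Inf_greatest)
  qed
qed

lemma closed_pair_free: "closed A \<mu> (frel A \<mu>) (fmem A \<mu>)"
proof (rule closed_pairI[OF free_rel_equiv _ _ _ _ free_pair_sequent])
  show "(Op f ss, Op f ts) \<in> frel A \<mu>"
    if "f \<in> Ops" "length ss = ar f" "length ts = ar f" "\<forall>i<ar f. (ss ! i, ts ! i) \<in> frel A \<mu>"
    for f ss ts
    using that closed_pair_cong closed_pair_least(1) unfolding free_rel_eq_Inter by blast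
  show "\<mu> a \<le> fmem A \<mu> (V a)" if "a \<in> A" for a
    unfolding free_mem_eq_Inf using closed_pair_gen[OF _ that] by (blast intro: Inf_greatest)
  show "Inf (fmem A \<mu> ` set ts) \<le> fmem A \<mu> (Op f ts)"
    if "f \<in> Ops" "length ts = ar f" "\<forall>t\<in>set ts. wf_trm Ops ar C A t" for f ts
  proof (unfold free_mem_eq_Inf[of _ _ "Op f ts"], rule Inf_greatest, clarify)
    fix R \<nu> assume cl: "closed A \<mu> R \<nu>"
    have "Inf (fmem A \<mu> ` set ts) \<le> Inf (\<nu> ` set ts)"
      using closed_pair_least(2)[OF cl] by (auto intro!: Inf_mono)
    also have "\<dots> \<le> \<nu> (Op f ts)" using closed_pair_op[OF cl that] .
    finally show "Inf (fmem A \<mu> ` set ts) \<le> \<nu> (Op f ts)" .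
  qed
  show "fmem A \<mu> s = fmem A \<mu> t" if "(s,t) \<in> frel A \<mu>" for s t
  proof -
    have "\<nu> s = \<nu> t" if "closed A \<mu> R \<nu>" for R \<nu>
      using closed_pair_resp[OF that] closed_pair_least(1)[OF that] \<open>(s,t) \<in> frel A \<mu>\<close> by blast
    then have "{\<nu> s | R \<nu>. closed A \<mu> R \<nu>} = {\<nu> t | R \<nu>. closed A \<mu> R \<nu>}" by metis
    then show ?thesis unfolding free_mem_eq_Inf by simp
  qed
qed

lemmas free_rel_cong = closed_pair_cong[OF closed_pair_free]
lemmas free_mem_gen = closed_pair_gen[OF closed_pair_free]
lemmas free_mem_op = closed_pair_op[OF closed_pair_free]
lemmas free_mem_resp = closed_pair_resp[OF closed_pair_free]

lemma free_rel_refl: "wf_trm Ops ar C A t \<Longrightarrow> (t,t) \<in> frel A \<mu>"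
  using free_rel_equiv by (auto simp: equiv_def refl_on_def)

lemma free_rel_wf: "(s,t) \<in> frel A \<mu> \<Longrightarrow> wf_trm Ops ar C A s \<and> wf_trm Ops ar C A t"
  using free_rel_equiv by (auto simp: equiv_def)

lemma free_rel_sym: "(s,t) \<in> frel A \<mu> \<Longrightarrow> (t,s) \<in> frel A \<mu>"
  using free_rel_equiv by (auto simp: equiv_def dest: symD)

lemma free_rel_trans: "(s,t) \<in> frel A \<mu> \<Longrightarrow> (t,u) \<in> frel A \<mu> \<Longrightarrow> (s,u) \<in> frel A \<mu>"
  using free_rel_equiv by (auto simp: equiv_def dest: transD)

lemma model_is_alg: "model B \<nu> ops cst \<Longrightarrow> is_alg Ops ar C B \<nu> ops cst"
  unfolding is_model_def by blast

lemma model_sequent: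
  "model B \<nu> ops cst \<Longrightarrow> (\<Gamma>,\<psi>) \<in> \<Lambda> \<Longrightarrow> \<forall>x\<in>X. \<iota> x \<in> B \<Longrightarrow>
    \<forall>\<phi>\<in>\<Gamma>. holds \<nu> ops cst \<iota> \<phi> \<Longrightarrow> holds \<nu> ops cst \<iota> \<psi>"
  unfolding is_model_def by blast

lemma tholds_eval_kernel:
  assumes "wf_fml Ops ar C X \<phi>" and "\<forall>x\<in>X. wf_trm Ops ar C A (\<iota> x)"
  shows "tholds {(s,t). wf_trm Ops ar C A s \<and> wf_trm Ops ar C A t \<and> eval ops cst g s = eval ops cst g t}
           (\<lambda>t. \<nu> (eval ops cst g t)) \<iota> \<phi> \<longleftrightarrow> holds \<nu> ops cst (eval ops cst g \<circ> \<iota>) \<phi>"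
  using assms by (cases \<phi>) (auto simp: eval_subst intro: wf_trm_subst)

lemma closed_pair_eval_kernel:
  assumes B: "model B \<nu> ops cst" and g: "fuz_arrow A \<mu> B \<nu> g"
  shows "closed A \<mu> {(s,t). wf_trm Ops ar C A s \<and> wf_trm Ops ar C A t \<and> eval ops cst g s = eval ops cst g t}
           (\<lambda>t. \<nu> (eval ops cst g t))"
    (is "closed A \<mu> ?R ?\<nu>")
proof (rule closed_pairI)
  have alg: "is_alg Ops ar C B \<nu> ops cst" using model_is_alg[OF B] .
  have eval_in: "wf_trm Ops ar C A t \<Longrightarrow> eval ops cst g t \<in> B" for t
    using eval_in_carrier[OF _ alg] g by (auto simp: fuz_arrow_def)
  show "equiv (trms A) ?R" by (rule equivI) (auto simp: refl_on_def sym_def trans_def)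
  show "(Op f ss, Op f ts) \<in> ?R"
    if "f \<in> Ops" "length ss = ar f" "length ts = ar f" "\<forall>i<ar f. (ss ! i, ts ! i) \<in> ?R" for f ss ts
  proof -
    have "map (eval ops cst g) ss = map (eval ops cst g) ts"
      using that by (intro nth_equalityI) auto
    then show ?thesis using that by (auto simp: in_set_conv_nth)
  qed
  show "\<mu> a \<le> ?\<nu> (V a)" if "a \<in> A" for a using g that by (simp add: fuz_arrow_def)
  show "Inf (?\<nu> ` set ts) \<le> ?\<nu> (Op f ts)"
    if "f \<in> Ops" "length ts = ar f" "\<forall>t\<in>set ts. wf_trm Ops ar C A t" for f ts
    using is_algD_op[OF alg that(1), of "map (eval ops cst g) ts"] that eval_in
    by (auto simp: image_image)
  show "?\<nu> s = ?\<nu> t" if "(s,t) \<in> ?R" for s t using that by simp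
  show "tholds ?R ?\<nu> \<iota> \<psi>"
    if \<Lambda>: "(\<Gamma>,\<psi>) \<in> \<Lambda>" and \<iota>: "\<forall>x\<in>X. wf_trm Ops ar C A (\<iota> x)"
      and prem: "\<forall>\<phi>\<in>\<Gamma>. tholds ?R ?\<nu> \<iota> \<phi>" for \<Gamma> \<psi> \<iota>
  proof -
    have "\<forall>\<phi>\<in>\<Gamma>. holds \<nu> ops cst (eval ops cst g \<circ> \<iota>) \<phi>"
      using prem tholds_eval_kernel[OF _ \<iota>] sequent_wf[OF \<Lambda>] by blast
    moreover have "\<forall>x\<in>X. (eval ops cst g \<circ> \<iota>) x \<in> B" using \<iota> eval_in by simp
    ultimately have "holds \<nu> ops cst (eval ops cst g \<circ> \<iota>) \<psi>"
      using model_sequent[OF B \<Lambda>] by blast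
    then show ?thesis using tholds_eval_kernel[OF _ \<iota>] sequent_wf[OF \<Lambda>] by blast
  qed
qed

lemma free_rel_eval_eq:
  "model B \<nu> ops cst \<Longrightarrow> fuz_arrow A \<mu> B \<nu> g \<Longrightarrow> (s,t) \<in> frel A \<mu> \<Longrightarrow>
    eval ops cst g s = eval ops cst g t"
  using closed_pair_least(1)[OF closed_pair_eval_kernel] by blast

lemma free_mem_le_eval:
  assumes "model B \<nu> ops cst" and "fuz_arrow A \<mu> B \<nu> g"
  shows "fmem A \<mu> t \<le> \<nu> (eval ops cst g t)"
  using closed_pair_least(2)[OF closed_pair_eval_kernel[OF assms]] by simp

lemma tholds_subst_kernel:
  assumes "wf_fml Ops ar C X \<phi>" and "\<forall>x\<in>X. wf_trm Ops ar C A (\<iota> x)"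
    and "\<forall>a\<in>A. wf_trm Ops ar C B (\<sigma> a)"
  shows "tholds {(s,t). wf_trm Ops ar C A s \<and> wf_trm Ops ar C A t \<and> (subst \<sigma> s, subst \<sigma> t) \<in> frel B \<nu>}
           (\<lambda>t. fmem B \<nu> (subst \<sigma> t)) \<iota> \<phi> \<longleftrightarrow> tholds (frel B \<nu>) (fmem B \<nu>) (subst \<sigma> \<circ> \<iota>) \<phi>"
  using assms by (cases \<phi>) (auto simp: subst_subst intro: wf_trm_subst)

lemma closed_pair_subst_kernel:
  assumes \<sigma>: "\<forall>a\<in>A. wf_trm Ops ar C B (\<sigma> a) \<and> \<mu> a \<le> fmem B \<nu> (\<sigma> a)"
  shows "closed A \<mu> {(s,t). wf_trm Ops ar C A s \<and> wf_trm Ops ar C A t \<and> (subst \<sigma> s, subst \<sigma> t) \<in> frel B \<nu>}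
           (\<lambda>t. fmem B \<nu> (subst \<sigma> t))"
    (is "closed A \<mu> ?R ?\<nu>")
proof (rule closed_pairI)
  have subst_wf: "wf_trm Ops ar C A t \<Longrightarrow> wf_trm Ops ar C B (subst \<sigma> t)" for t
    using wf_trm_subst \<sigma> by blast
  show "equiv (trms A) ?R"
    by (rule equivI)
      (auto simp: refl_on_def sym_def trans_def intro: free_rel_refl subst_wf free_rel_sym free_rel_trans)
  show "(Op f ss, Op f ts) \<in> ?R"
    if "f \<in> Ops" "length ss = ar f" "length ts = ar f" "\<forall>i<ar f. (ss ! i, ts ! i) \<in> ?R" for f ss ts
  proof -
    have "(Op f (map (subst \<sigma>) ss), Op f (map (subst \<sigma>) ts)) \<in> frel B \<nu>"
      using that by (intro free_rel_cong) auto
    then show ?thesis using that by (auto simp: in_set_conv_nth)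
  qed
  show "\<mu> a \<le> ?\<nu> (V a)" if "a \<in> A" for a using \<sigma> that by simp
  show "Inf (?\<nu> ` set ts) \<le> ?\<nu> (Op f ts)"
    if "f \<in> Ops" "length ts = ar f" "\<forall>t\<in>set ts. wf_trm Ops ar C A t" for f ts
    using free_mem_op[of f "map (subst \<sigma>) ts"] that subst_wf by (auto simp: image_image)
  show "?\<nu> s = ?\<nu> t" if "(s,t) \<in> ?R" for s t using that free_mem_resp by auto
  show "tholds ?R ?\<nu> \<iota> \<psi>"
    if \<Lambda>: "(\<Gamma>,\<psi>) \<in> \<Lambda>" and \<iota>: "\<forall>x\<in>X. wf_trm Ops ar C A (\<iota> x)"
      and prem: "\<forall>\<phi>\<in>\<Gamma>. tholds ?R ?\<nu> \<iota> \<phi>" for \<Gamma> \<psi> \<iota>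
  proof -
    have \<sigma>_wf: "\<forall>a\<in>A. wf_trm Ops ar C B (\<sigma> a)" using \<sigma> by blast
    have "\<forall>\<phi>\<in>\<Gamma>. tholds (frel B \<nu>) (fmem B \<nu>) (subst \<sigma> \<circ> \<iota>) \<phi>"
      using prem tholds_subst_kernel[OF _ \<iota> \<sigma>_wf] sequent_wf[OF \<Lambda>] by blast
    moreover have "\<forall>x\<in>X. wf_trm Ops ar C B ((subst \<sigma> \<circ> \<iota>) x)" using \<iota> subst_wf by simp
    ultimately have "tholds (frel B \<nu>) (fmem B \<nu>) (subst \<sigma> \<circ> \<iota>) \<psi>"
      using free_pair_sequent[OF \<Lambda>] by blast
    then show ?thesis using tholds_subst_kernel[OF _ \<iota> \<sigma>_wf] sequent_wf[OF \<Lambda>] by blast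
  qed
qed

lemma free_rel_subst:
  "\<forall>a\<in>A. wf_trm Ops ar C B (\<sigma> a) \<and> \<mu> a \<le> fmem B \<nu> (\<sigma> a) \<Longrightarrow> (s,t) \<in> frel A \<mu> \<Longrightarrow>
    (subst \<sigma> s, subst \<sigma> t) \<in> frel B \<nu>"
  using closed_pair_least(1)[OF closed_pair_subst_kernel] by blast

definition rep :: "('o,'c,'a) trm set \<Rightarrow> ('o,'c,'a) trm" where
  "rep c = (SOME t. t \<in> c)"

lemma free_class_in_Tcar: "wf_trm Ops ar C A t \<Longrightarrow> fcls A \<mu> t \<in> TC A \<mu>"
  unfolding Tcar_def by (rule quotientI) simp

lemma free_class_eqI: "(s,t) \<in> frel A \<mu> \<Longrightarrow> fcls A \<mu> s = fcls A \<mu> t"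
  using equiv_class_eq[OF free_rel_equiv] by blast

lemma Tcar_cases:
  assumes "c \<in> TC A \<mu>"
  obtains t where "wf_trm Ops ar C A t" and "c = fcls A \<mu> t"
  using assms unfolding Tcar_def by (auto elim: quotientE)

lemma rep_class_rel:
  assumes "wf_trm Ops ar C A t"
  shows "(t, rep (fcls A \<mu> t)) \<in> frel A \<mu>"
proof -
  have "t \<in> fcls A \<mu> t" using free_rel_refl[OF assms] by simp
  then have "rep (fcls A \<mu> t) \<in> fcls A \<mu> t" unfolding rep_def by (rule someI)
  then show ?thesis by simp
qed

lemma rep_wf: "c \<in> TC A \<mu> \<Longrightarrow> wf_trm Ops ar C A (rep c)"
  by (elim Tcar_cases) (auto dest: rep_class_rel free_rel_wf)

lemma class_rep: "c \<in> TC A \<mu> \<Longrightarrow> fcls A \<mu> (rep c) = c"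
  by (elim Tcar_cases) (auto dest: rep_class_rel free_class_eqI)

lemma Tmem_class:
  assumes "wf_trm Ops ar C A t"
  shows "TM A \<mu> (fcls A \<mu> t) = fmem A \<mu> t"
  unfolding Tmem_def
proof (rule SUP_eq_const)
  show "fcls A \<mu> t \<noteq> {}" using free_rel_refl[OF assms] by blast
  show "fmem A \<mu> s = fmem A \<mu> t" if "s \<in> fcls A \<mu> t" for s
    using free_mem_resp[of t s] that by simp
qed

lemma Tmem_rep: "c \<in> TC A \<mu> \<Longrightarrow> TM A \<mu> c = fmem A \<mu> (rep c)"
  using Tmem_class[OF rep_wf] class_rep by metis

lemma Tmap_class:
  assumes g: "fuz_arrow A \<mu> B \<nu> g" and t: "wf_trm Ops ar C A t"
  shows "Tmap Ops ar C X \<Lambda> B \<nu> g (fcls A \<mu> t) = fcls B \<nu> (subst (\<lambda>a. V (g a)) t)"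
proof -
  have "\<forall>a\<in>A. wf_trm Ops ar C B (V (g a)) \<and> \<mu> a \<le> fmem B \<nu> (V (g a))"
    using g free_mem_gen unfolding fuz_arrow_def by (metis order_trans wf_trm_V_iff)
  from free_rel_subst[OF this rep_class_rel[OF t]]
  have "fcls B \<nu> (subst (\<lambda>a. V (g a)) t) = fcls B \<nu> (subst (\<lambda>a. V (g a)) (rep (fcls A \<mu> t)))"
    by (rule free_class_eqI)
  then show ?thesis unfolding Tmap_def rep_def by simp
qed

lemma Tmult_class:
  assumes T: "wf_trm Ops ar C (TC A \<mu>) T"
  shows "Tmult Ops ar C X \<Lambda> A \<mu> (fcls (TC A \<mu>) (TM A \<mu>) T) = fcls A \<mu> (subst rep T)"
proof -
  have "\<forall>c\<in>TC A \<mu>. wf_trm Ops ar C A (rep c) \<and> TM A \<mu> c \<le> fmem A \<mu> (rep c)"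
    by (simp add: rep_wf Tmem_rep)
  from free_rel_subst[OF this rep_class_rel[OF T]]
  have "fcls A \<mu> (subst rep T) = fcls A \<mu> (subst rep (rep (fcls (TC A \<mu>) (TM A \<mu>) T)))"
    by (rule free_class_eqI)
  then show ?thesis unfolding Tmult_def rep_def[abs_def] by simp
qed

lemma counit_class:
  assumes "model A \<mu> ops cst" and "wf_trm Ops ar C A t"
  shows "counit ops cst (fcls A \<mu> t) = eval ops cst id t"
proof -
  have "fuz_arrow A \<mu> A \<mu> id" by (simp add: fuz_arrow_def)
  from free_rel_eval_eq[OF assms(1) this rep_class_rel[OF assms(2)]] show ?thesis
    unfolding counit_def rep_def by simp
qed

lemma counit_Tmap:
  assumes B: "model B \<nu> ops cst" and h: "fuz_arrow A \<mu> B \<nu> h" and t: "wf_trm Ops ar C A t"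
  shows "counit ops cst (Tmap Ops ar C X \<Lambda> B \<nu> h (fcls A \<mu> t)) = eval ops cst h t"
proof -
  have "wf_trm Ops ar C B (subst (\<lambda>a. V (h a)) t)"
    using h by (intro wf_trm_subst[OF t]) (simp add: fuz_arrow_def)
  then show ?thesis
    by (simp add: Tmap_class[OF h t] counit_class[OF B] eval_subst comp_def)
qed

lemma counit_is_EM:
  assumes A: "model A \<mu> ops cst"
  shows "is_EM Ops ar C X \<Lambda> A \<mu> (counit ops cst)"
  unfolding is_EM_def
proof (intro conjI ballI)
  have counit_rep: "c \<in> TC A \<mu> \<Longrightarrow> counit ops cst c = eval ops cst id (rep c)" for c
    using counit_class[OF A rep_wf] class_rep by metis
  have id: "fuz_arrow A \<mu> A \<mu> id" by (simp add: fuz_arrow_def)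
  show arrow: "fuz_arrow (TC A \<mu>) (TM A \<mu>) A \<mu> (counit ops cst)"
    unfolding fuz_arrow_def
  proof
    fix c assume c: "c \<in> TC A \<mu>"
    show "counit ops cst c \<in> A \<and> TM A \<mu> c \<le> \<mu> (counit ops cst c)"
      using eval_in_carrier[OF rep_wf[OF c] model_is_alg[OF A], of id] free_mem_le_eval[OF A id]
      by (simp add: counit_rep[OF c] Tmem_rep[OF c])
  qed
  show "counit ops cst (Tunit Ops ar C X \<Lambda> A \<mu> a) = a" if "a \<in> A" for a
    using counit_class[OF A, of "V a"] that unfolding Tunit_def by simp
  fix Z assume "Z \<in> TC (TC A \<mu>) (TM A \<mu>)"
  then obtain T where T: "wf_trm Ops ar C (TC A \<mu>) T" and Z: "Z = fcls (TC A \<mu>) (TM A \<mu>) T"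
    by (rule Tcar_cases)
  have "counit ops cst (Tmult Ops ar C X \<Lambda> A \<mu> Z) = eval ops cst id (subst rep T)"
    unfolding Z Tmult_class[OF T] using counit_class[OF A wf_trm_subst[OF T rep_wf]] .
  also have "\<dots> = eval ops cst (counit ops cst) T"
    unfolding eval_subst using T by (rule eval_cong) (simp add: counit_rep)
  also have "\<dots> = counit ops cst (Tmap Ops ar C X \<Lambda> A \<mu> (counit ops cst) Z)"
    unfolding Z using counit_Tmap[OF A arrow T] by simp
  finally show "counit ops cst (Tmult Ops ar C X \<Lambda> A \<mu> Z) =
      counit ops cst (Tmap Ops ar C X \<Lambda> A \<mu> (counit ops cst) Z)" .
qed

lemma alg_hom_iff_EM_hom:
  assumes A: "model A \<mu> ops cst" and B: "model B \<nu> ops' cst'"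
  shows "alg_hom Ops ar C A \<mu> ops cst B \<nu> ops' cst' h \<longleftrightarrow>
         is_EM_hom Ops ar C X \<Lambda> A \<mu> (counit ops cst) B \<nu> (counit ops' cst') h"
proof -
  have EM_square_iff:
    "(\<forall>c\<in>TC A \<mu>. h (counit ops cst c) = counit ops' cst' (Tmap Ops ar C X \<Lambda> B \<nu> h c)) \<longleftrightarrow>
     (\<forall>t\<in>trms A. h (eval ops cst id t) = eval ops' cst' h t)"
    if h: "fuz_arrow A \<mu> B \<nu> h"
  proof -
    have "h (counit ops cst (fcls A \<mu> t)) = counit ops' cst' (Tmap Ops ar C X \<Lambda> B \<nu> h (fcls A \<mu> t))
      \<longleftrightarrow> h (eval ops cst id t) = eval ops' cst' h t" if "wf_trm Ops ar C A t" for t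
      using counit_class[OF A that] counit_Tmap[OF B h that] by simp
    then show ?thesis using free_class_in_Tcar by (fastforce elim!: Tcar_cases)
  qed
  show ?thesis
  proof
    assume hom: "alg_hom Ops ar C A \<mu> ops cst B \<nu> ops' cst' h"
    then have "fuz_arrow A \<mu> B \<nu> h" by (simp add: alg_hom_def)
    with hom show "is_EM_hom Ops ar C X \<Lambda> A \<mu> (counit ops cst) B \<nu> (counit ops' cst') h"
      unfolding is_EM_hom_def EM_square_iff[OF \<open>fuz_arrow A \<mu> B \<nu> h\<close>]
      using alg_hom_eval[OF model_is_alg[OF A]] by blast
  next
    assume EM_hom: "is_EM_hom Ops ar C X \<Lambda> A \<mu> (counit ops cst) B \<nu> (counit ops' cst') h"
    then have h: "fuz_arrow A \<mu> B \<nu> h" by (simp add: is_EM_hom_def)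
    with EM_hom have eval: "h (eval ops cst id t) = eval ops' cst' h t" if "wf_trm Ops ar C A t" for t
      unfolding is_EM_hom_def EM_square_iff[OF h] using that by blast
    show "alg_hom Ops ar C A \<mu> ops cst B \<nu> ops' cst' h"
      unfolding alg_hom_def
      using h eval[of "K _"] eval[of "Op _ (map V _)"] by (auto simp: comp_def)
  qed
qed

definition EM_ops :: "'a set \<Rightarrow> ('a \<Rightarrow> 'h) \<Rightarrow> (('o,'c,'a) trm set \<Rightarrow> 'a) \<Rightarrow> 'o \<Rightarrow> 'a list \<Rightarrow> 'a" where
  "EM_ops A \<mu> \<alpha> f xs =
     (if f \<in> Ops \<and> length xs = ar f \<and> set xs \<subseteq> A then \<alpha> (fcls A \<mu> (Op f (map V xs))) else undefined)"

definition EM_cst :: "'a set \<Rightarrow> ('a \<Rightarrow> 'h) \<Rightarrow> (('o,'c,'a) trm set \<Rightarrow> 'a) \<Rightarrow> 'c \<Rightarrow> 'a" where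
  "EM_cst A \<mu> \<alpha> c = (if c \<in> C then \<alpha> (fcls A \<mu> (K c)) else undefined)"

lemma is_EMD:
  assumes "is_EM Ops ar C X \<Lambda> A \<mu> \<alpha>"
  shows is_EM_arrow: "fuz_arrow (TC A \<mu>) (TM A \<mu>) A \<mu> \<alpha>"
    and is_EM_unit: "\<And>a. a \<in> A \<Longrightarrow> \<alpha> (fcls A \<mu> (V a)) = a"
    and is_EM_mult: "\<And>Z. Z \<in> TC (TC A \<mu>) (TM A \<mu>) \<Longrightarrow>
      \<alpha> (Tmult Ops ar C X \<Lambda> A \<mu> Z) = \<alpha> (Tmap Ops ar C X \<Lambda> A \<mu> \<alpha> Z)"
  using assms unfolding is_EM_def Tunit_def by blast+

lemma EM_class_in_carrier:
  "is_EM Ops ar C X \<Lambda> A \<mu> \<alpha> \<Longrightarrow> wf_trm Ops ar C A t \<Longrightarrow> \<alpha> (fcls A \<mu> t) \<in> A"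
  using is_EM_arrow free_class_in_Tcar unfolding fuz_arrow_def by blast

lemma EM_class_mem:
  "is_EM Ops ar C X \<Lambda> A \<mu> \<alpha> \<Longrightarrow> wf_trm Ops ar C A t \<Longrightarrow> fmem A \<mu> t \<le> \<mu> (\<alpha> (fcls A \<mu> t))"
  using is_EM_arrow free_class_in_Tcar Tmem_class unfolding fuz_arrow_def by metis

text \<open>The multiplication law, applied to the class of \<open>f([t\<^sub>1],\<dots>,[t\<^sub>n])\<close> in the free model over
  \<open>T(A,\<mu>)\<close>, says that \<open>\<alpha>\<close> commutes with the operations.\<close>
lemma EM_class_Op:
  assumes EM: "is_EM Ops ar C X \<Lambda> A \<mu> \<alpha>" and f: "f \<in> Ops" "length ts = ar f"
    and ts: "\<forall>t\<in>set ts. wf_trm Ops ar C A t"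
  shows "\<alpha> (fcls A \<mu> (Op f ts)) = EM_ops A \<mu> \<alpha> f (map (\<lambda>t. \<alpha> (fcls A \<mu> t)) ts)"
proof -
  let ?T = "Op f (map (\<lambda>t. V (fcls A \<mu> t)) ts)"
  have T: "wf_trm Ops ar C (TC A \<mu>) ?T" using f ts by (auto intro: free_class_in_Tcar)
  have "(Op f ts, subst rep ?T) \<in> frel A \<mu>"
    using f ts by (auto intro!: free_rel_cong rep_class_rel)
  then have "Tmult Ops ar C X \<Lambda> A \<mu> (fcls (TC A \<mu>) (TM A \<mu>) ?T) = fcls A \<mu> (Op f ts)"
    unfolding Tmult_class[OF T] by (metis free_class_eqI)
  moreover have "Tmap Ops ar C X \<Lambda> A \<mu> \<alpha> (fcls (TC A \<mu>) (TM A \<mu>) ?T) =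
      fcls A \<mu> (Op f (map V (map (\<lambda>t. \<alpha> (fcls A \<mu> t)) ts)))"
    unfolding Tmap_class[OF is_EM_arrow[OF EM] T] by (simp add: comp_def)
  ultimately have "\<alpha> (fcls A \<mu> (Op f ts)) = \<alpha> (fcls A \<mu> (Op f (map V (map (\<lambda>t. \<alpha> (fcls A \<mu> t)) ts))))"
    using is_EM_mult[OF EM free_class_in_Tcar[OF T]] by simp
  then show ?thesis using f ts EM_class_in_carrier[OF EM] by (auto simp: EM_ops_def)
qed

lemma EM_class_eval:
  assumes EM: "is_EM Ops ar C X \<Lambda> A \<mu> \<alpha>" and t: "wf_trm Ops ar C A t"
  shows "\<alpha> (fcls A \<mu> t) = eval (EM_ops A \<mu> \<alpha>) (EM_cst A \<mu> \<alpha>) id t"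
  using t
proof induction
  case (wf_V a)
  then show ?case using is_EM_unit[OF EM] by simp
next
  case (wf_K c)
  then show ?case by (simp add: EM_cst_def)
next
  case (wf_Op f ts)
  then show ?case using EM_class_Op[OF EM wf_Op(1,2)] by (simp cong: map_cong)
qed

lemma EM_ops_is_alg:
  assumes EM: "is_EM Ops ar C X \<Lambda> A \<mu> \<alpha>"
  shows "is_alg Ops ar C A \<mu> (EM_ops A \<mu> \<alpha>) (EM_cst A \<mu> \<alpha>)"
  unfolding is_alg_def
proof (intro conjI ballI allI impI)
  show "EM_cst A \<mu> \<alpha> c \<in> A" if "c \<in> C" for c
    using EM_class_in_carrier[OF EM, of "K c"] that by (simp add: EM_cst_def)
  fix f xs assume f: "f \<in> Ops" and xs: "length xs = ar f \<and> set xs \<subseteq> A"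
  then have t: "wf_trm Ops ar C A (Op f (map V xs))" by auto
  have ops: "EM_ops A \<mu> \<alpha> f xs = \<alpha> (fcls A \<mu> (Op f (map V xs)))" using f xs by (simp add: EM_ops_def)
  show "EM_ops A \<mu> \<alpha> f xs \<in> A" unfolding ops using EM_class_in_carrier[OF EM t] .
  have "Inf (\<mu> ` set xs) \<le> Inf (fmem A \<mu> ` V ` set xs)"
  proof (rule Inf_mono)
    fix b assume "b \<in> fmem A \<mu> ` V ` set xs"
    then obtain a where "a \<in> set xs" and "b = fmem A \<mu> (V a)" by blast
    then show "\<exists>a\<in>\<mu> ` set xs. a \<le> b" using xs free_mem_gen[of a A \<mu>] by blast
  qed
  also have "\<dots> \<le> fmem A \<mu> (Op f (map V xs))"
    using free_mem_op[of f "map V xs"] f xs by (auto simp: image_image)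
  also have "\<dots> \<le> \<mu> (EM_ops A \<mu> \<alpha> f xs)" unfolding ops using EM_class_mem[OF EM t] .
  finally show "Inf (\<mu> ` set xs) \<le> \<mu> (EM_ops A \<mu> \<alpha> f xs)" .
qed (auto simp: EM_ops_def EM_cst_def)

text \<open>Premises of a basic sequent only mention variables, so the generator assignment satisfies
  them in the free model as soon as \<open>\<iota>\<close> satisfies them in \<open>(A,\<mu>)\<close>, whatever the operations.\<close>
lemma basic_premise_free:
  assumes "basic_theory X \<Lambda>" and "(\<Gamma>,\<psi>) \<in> \<Lambda>" and "\<phi> \<in> \<Gamma>" and \<iota>: "\<forall>x\<in>X. \<iota> x \<in> A"
    and holds: "holds \<mu> ops cst \<iota> \<phi>"
  shows "tholds (frel A \<mu>) (fmem A \<mu>) (\<lambda>x. V (\<iota> x)) \<phi>"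
proof -
  have "(\<exists>x y. x \<in> X \<and> y \<in> X \<and> \<phi> = Eqn (V x) (V y)) \<or> (\<exists>l x. x \<in> X \<and> \<phi> = Mem l (V x))"
    using assms(1-3) unfolding basic_theory_def by blast
  then show ?thesis
  proof (elim disjE exE conjE)
    fix x y assume "x \<in> X" "y \<in> X" and \<phi>: "\<phi> = Eqn (V x) (V y)"
    then show ?thesis using holds \<iota> free_rel_refl[of A "V (\<iota> x)" \<mu>] by simp
  next
    fix l x assume x: "x \<in> X" and \<phi>: "\<phi> = Mem l (V x)"
    have "l \<le> \<mu> (\<iota> x)" using holds \<phi> by simp
    also have "\<dots> \<le> fmem A \<mu> (V (\<iota> x))" using free_mem_gen[of "\<iota> x" A \<mu>] \<iota> x by simp
    finally show ?thesis using \<phi> by simp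
  qed
qed

lemma EM_ops_model:
  assumes basic: "basic_theory X \<Lambda>" and EM: "is_EM Ops ar C X \<Lambda> A \<mu> \<alpha>"
  shows "model A \<mu> (EM_ops A \<mu> \<alpha>) (EM_cst A \<mu> \<alpha>)"
  unfolding is_model_def
proof (intro conjI EM_ops_is_alg[OF EM] ballI allI impI, clarify)
  let ?ops = "EM_ops A \<mu> \<alpha>" and ?cst = "EM_cst A \<mu> \<alpha>"
  fix \<Gamma> \<psi> \<iota> assume \<Lambda>: "(\<Gamma>,\<psi>) \<in> \<Lambda>" and \<iota>: "\<forall>x\<in>X. \<iota> x \<in> A"
    and prem: "\<forall>\<phi>\<in>\<Gamma>. holds \<mu> ?ops ?cst \<iota> \<phi>"
  let ?\<sigma> = "\<lambda>x. V (\<iota> x)"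
  have concl: "tholds (frel A \<mu>) (fmem A \<mu>) ?\<sigma> \<psi>"
    by (rule free_pair_sequent[OF \<Lambda>]) (use \<iota> prem basic_premise_free[OF basic \<Lambda> _ \<iota>] in auto)
  have wf: "wf_trm Ops ar C A (subst ?\<sigma> t)" if "wf_trm Ops ar C X t" for t
    by (rule wf_trm_subst[OF that]) (use \<iota> in simp)
  have eval: "\<alpha> (fcls A \<mu> (subst ?\<sigma> t)) = eval ?ops ?cst \<iota> t" if "wf_trm Ops ar C X t" for t
    using EM_class_eval[OF EM wf[OF that]] by (simp add: eval_subst comp_def)
  show "holds \<mu> ?ops ?cst \<iota> \<psi>"
  proof (cases \<psi>)
    case (Eqn s t)
    then have s: "wf_trm Ops ar C X s" and t: "wf_trm Ops ar C X t" using sequent_wf[OF \<Lambda>] by simp_all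
    have "fcls A \<mu> (subst ?\<sigma> s) = fcls A \<mu> (subst ?\<sigma> t)"
      using concl Eqn by (simp add: free_class_eqI)
    then show ?thesis using eval[OF s] eval[OF t] Eqn by simp
  next
    case (Mem l t)
    then have t: "wf_trm Ops ar C X t" using sequent_wf[OF \<Lambda>] by simp
    have "l \<le> fmem A \<mu> (subst ?\<sigma> t)" using concl Mem by simp
    also have "\<dots> \<le> \<mu> (eval ?ops ?cst \<iota> t)" using EM_class_mem[OF EM wf[OF t]] eval[OF t] by simp
    finally show ?thesis using Mem by simp
  qed
qed

lemma counit_EM_ops:
  assumes "is_EM Ops ar C X \<Lambda> A \<mu> \<alpha>" and "c \<in> TC A \<mu>"
  shows "counit (EM_ops A \<mu> \<alpha>) (EM_cst A \<mu> \<alpha>) c = \<alpha> c"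
  using EM_class_eval[OF assms(1) rep_wf[OF assms(2)]] class_rep[OF assms(2)]
  unfolding counit_def rep_def by simp

lemma model_eq_if_counit_eq:
  assumes A: "model A \<mu> ops cst" and A': "model A \<mu> ops' cst'"
    and counit: "\<forall>c\<in>TC A \<mu>. counit ops cst c = counit ops' cst' c"
  shows "ops = ops'" and "cst = cst'"
proof -
  have eval: "eval ops cst id t = eval ops' cst' id t" if "wf_trm Ops ar C A t" for t
  proof -
    have "eval ops cst id t = counit ops cst (fcls A \<mu> t)" using counit_class[OF A that] by simp
    also have "\<dots> = counit ops' cst' (fcls A \<mu> t)" using counit free_class_in_Tcar[OF that] by blast
    also have "\<dots> = eval ops' cst' id t" using counit_class[OF A' that] .
    finally show ?thesis .
  qed
  have "ops f xs = ops' f xs" if "f \<in> Ops" "length xs = ar f" "set xs \<subseteq> A" for f xs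
    using eval[of "Op f (map V xs)"] that by (auto simp: comp_def)
  moreover have "cst c = cst' c" if "c \<in> C" for c
    using eval[of "K c"] that by simp
  ultimately show "ops = ops'" and "cst = cst'"
    using is_alg_ext[OF model_is_alg[OF A] model_is_alg[OF A']] by blast+
qed

lemma EM_unique_model:
  assumes basic: "basic_theory X \<Lambda>" and EM: "is_EM Ops ar C X \<Lambda> A \<mu> \<alpha>"
  shows "\<exists>!p. model A \<mu> (fst p) (snd p) \<and> (\<forall>c\<in>TC A \<mu>. counit (fst p) (snd p) c = \<alpha> c)"
proof (rule ex1I[of _ "(EM_ops A \<mu> \<alpha>, EM_cst A \<mu> \<alpha>)"])
  show "model A \<mu> (fst (EM_ops A \<mu> \<alpha>, EM_cst A \<mu> \<alpha>)) (snd (EM_ops A \<mu> \<alpha>, EM_cst A \<mu> \<alpha>)) \<and>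
      (\<forall>c\<in>TC A \<mu>. counit (fst (EM_ops A \<mu> \<alpha>, EM_cst A \<mu> \<alpha>)) (snd (EM_ops A \<mu> \<alpha>, EM_cst A \<mu> \<alpha>)) c = \<alpha> c)"
    using EM_ops_model[OF basic EM] counit_EM_ops[OF EM] by simp
next
  fix p assume p: "model A \<mu> (fst p) (snd p) \<and> (\<forall>c\<in>TC A \<mu>. counit (fst p) (snd p) c = \<alpha> c)"
  obtain ops cst where p_eq: "p = (ops, cst)" by fastforce
  have model: "model A \<mu> ops cst" using p unfolding p_eq by simp
  have "\<forall>c\<in>TC A \<mu>. counit ops cst c = counit (EM_ops A \<mu> \<alpha>) (EM_cst A \<mu> \<alpha>) c"
    using p counit_EM_ops[OF EM] unfolding p_eq by simp
  from model_eq_if_counit_eq[OF model EM_ops_model[OF basic EM] this]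
  show "p = (EM_ops A \<mu> \<alpha>, EM_cst A \<mu> \<alpha>)" unfolding p_eq by simp
qed

end

theorem theorem43:
  fixes Ops :: "'o set" and ar :: "'o \<Rightarrow> nat" and C :: "'c set" and X :: "'x set"
    and \<Lambda> :: "('o,'c,'x,'h::frame) sequent set"
  assumes arity: "\<forall>f\<in>Ops. 1 \<le> ar f"
    and thy: "fuzzy_theory Ops ar C X \<Lambda>"
    and basic: "basic_theory X \<Lambda>"
  shows
    "(\<forall>(A::'a set) \<mu> ops cst. is_model Ops ar C X \<Lambda> A \<mu> ops cst \<longrightarrow>
        is_EM Ops ar C X \<Lambda> A \<mu> (counit ops cst))
   \<and> (\<forall>(A::'a set) \<mu> ops cst (B::'b set) \<nu> ops' cst' h.
        is_model Ops ar C X \<Lambda> A \<mu> ops cst \<longrightarrow> is_model Ops ar C X \<Lambda> B \<nu> ops' cst' \<longrightarrow>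
        (alg_hom Ops ar C A \<mu> ops cst B \<nu> ops' cst' h \<longleftrightarrow>
         is_EM_hom Ops ar C X \<Lambda> A \<mu> (counit ops cst) B \<nu> (counit ops' cst') h))
   \<and> (\<forall>(A::'a set) \<mu> \<alpha>. is_EM Ops ar C X \<Lambda> A \<mu> \<alpha> \<longrightarrow>
        (\<exists>!p. is_model Ops ar C X \<Lambda> A \<mu> (fst p) (snd p) \<and>
              (\<forall>c\<in>Tcar Ops ar C X \<Lambda> A \<mu>. counit (fst p) (snd p) c = \<alpha> c)))"
proof -
  interpret fuzzy_thy Ops ar C X \<Lambda> by (rule fuzzy_thy.intro[OF thy])
  show ?thesis
    by (intro conjI allI impI) (simp_all add: counit_is_EM alg_hom_iff_EM_hom EM_unique_model[OF basic])
qed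

end
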